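(* Let $X,Y$ be continuous processes. Then 1. $L(X,Y)_t=\int_0^tX\,d^\circ Y-\int_0^tY\,d^\circ X$; 2. $L(X,Y)_t=\int_0^tX\,d^-Y-\int_0^tY\,d^-X$; where each identity is understood in the sense that if two of its three terms exist, then the third also exists and the identity holds.
   Context: $T>0$; continuous functions are extended by $f(t)=f(0)$ for $t\le0$, $f(t)=f(T)$ for $t>T$. Limits are ucp: uniform in $t\in[0,T]$, in probability, as $\varepsilon\to0^+$. $\int_0^tX\,d^-Y$ is the ucp limit of $\int_0^tX(s)\frac{Y(s+\varepsilon)-Y(s)}{\varepsilon}ds$, $\int_0^tX\,d^\circ Y$ the ucp limit of $\int_0^tX(s)\frac{Y(s+\varepsilon)-Y(s-\varepsilon)}{2\varepsilon}ds$, and the Lévy area $L(X,Y)_t$ the ucp limit of $\int_0^t\frac{X_sY_{s+\varepsilon}-X_{s+\varepsilon}Y_s}{\varepsilon}ds$. *)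

theory Defs
  imports "HOL-Probability.Probability"
begin

text \<open>Processes are maps X :: real => 'a => real on the time interval [0,T];
  they are extended by X(t) = X(0) for t <= 0 and X(t) = X(T) for t > T.\<close>

definition ext :: "real \<Rightarrow> (real \<Rightarrow> 'a \<Rightarrow> real) \<Rightarrow> real \<Rightarrow> 'a \<Rightarrow> real" where
  "ext T X s \<omega> = X (max 0 (min T s)) \<omega>"

definition cont_process :: "'a measure \<Rightarrow> real \<Rightarrow> (real \<Rightarrow> 'a \<Rightarrow> real) \<Rightarrow> bool" where
  "cont_process M T X \<longleftrightarrow>
     (\<forall>t\<in>{0..T}. X t \<in> borel_measurable M) \<and>
     (\<forall>\<omega>\<in>space M. continuous_on {0..T} (\<lambda>t. X t \<omega>))"

text \<open>The probability of the (possibly non-measurable)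
  exceptional event is taken as an outer probability.\<close>
definition ucp_conv :: "'a measure \<Rightarrow> real \<Rightarrow> (real \<Rightarrow> real \<Rightarrow> 'a \<Rightarrow> real)
                        \<Rightarrow> (real \<Rightarrow> 'a \<Rightarrow> real) \<Rightarrow> bool" where
  "ucp_conv M T F I \<longleftrightarrow> cont_process M T I \<and>
     (\<forall>\<delta>>0. \<forall>\<eta>>0. \<exists>\<epsilon>0>0. \<forall>\<epsilon>. 0 < \<epsilon> \<and> \<epsilon> < \<epsilon>0 \<longrightarrow>
        (\<exists>A\<in>sets M. {\<omega>\<in>space M. \<exists>t\<in>{0..T}. \<bar>F \<epsilon> t \<omega> - I t \<omega>\<bar> > \<delta>} \<subseteq> A
                    \<and> measure M A < \<eta>))"

definition fwd_approx :: "real \<Rightarrow> (real \<Rightarrow> 'a \<Rightarrow> real) \<Rightarrow> (real \<Rightarrow> 'a \<Rightarrow> real)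
                          \<Rightarrow> real \<Rightarrow> real \<Rightarrow> 'a \<Rightarrow> real" where
  "fwd_approx T X Y \<epsilon> t \<omega> =
     integral {0..t} (\<lambda>s. ext T X s \<omega> * ((ext T Y (s + \<epsilon>) \<omega> - ext T Y s \<omega>) / \<epsilon>))"

definition sym_approx :: "real \<Rightarrow> (real \<Rightarrow> 'a \<Rightarrow> real) \<Rightarrow> (real \<Rightarrow> 'a \<Rightarrow> real)
                          \<Rightarrow> real \<Rightarrow> real \<Rightarrow> 'a \<Rightarrow> real" where
  "sym_approx T X Y \<epsilon> t \<omega> =
     integral {0..t} (\<lambda>s. ext T X s \<omega> * ((ext T Y (s + \<epsilon>) \<omega> - ext T Y (s - \<epsilon>) \<omega>) / (2 * \<epsilon>)))"

definition levy_approx :: "real \<Rightarrow> (real \<Rightarrow> 'a \<Rightarrow> real) \<Rightarrow> (real \<Rightarrow> 'a \<Rightarrow> real)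
                          \<Rightarrow> real \<Rightarrow> real \<Rightarrow> 'a \<Rightarrow> real" where
  "levy_approx T X Y \<epsilon> t \<omega> =
     integral {0..t} (\<lambda>s. (ext T X s \<omega> * ext T Y (s + \<epsilon>) \<omega> - ext T X (s + \<epsilon>) \<omega> * ext T Y s \<omega>) / \<epsilon>)"

end

theory Submission
  imports Defs
begin

(* Write g(s) = (x(s) y(s+e) - x(s+e) y(s)) / e for the integrand of the Levy-area approximation.
   The integrands of the two symmetric approximations satisfy, pointwise,
     x(s) (y(s+e) - y(s-e)) / (2e) - y(s) (x(s+e) - x(s-e)) / (2e) = (g(s) + g(s-e)) / 2,
   so the Levy approximation minus the difference of the symmetric ones is half of
   int_{t-e}^t g - int_{-e}^0 g.  Writing g(s) = (x(s) (y(s+e) - y(s)) - y(s) (x(s+e) - x(s))) / e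
   shows |g| <= 2 m c / e when the paths are bounded by m and oscillate by at most c over
   distance e, so this defect is at most 2 m c.  A continuous process is bounded and uniformly
   continuous in probability, hence the defect tends to 0 ucp.  For the forward integrals the
   Levy approximation is exactly the difference of the two forward approximations. *)

section \<open>The pathwise defect estimate\<close>

lemma integral_minus_integral_shift:
  fixes g :: "real \<Rightarrow> real"
  assumes g: "continuous_on UNIV g" and "0 \<le> t" "0 \<le> e"
  shows "integral {0..t} g - integral {0..t} (\<lambda>s. g (s - e))
           = integral {t - e..t} g - integral {-e..0} g"
proof -
  have int: "g integrable_on {a..b}" for a b
    by (rule integrable_continuous_interval) (rule continuous_on_subset[OF g], simp)
  have "integral {0..t} (\<lambda>s. g (s - e)) = integral {-e..t - e} g"
    using integral_shift_Icc_real[of 0 t g "-e"] by (simp add: o_def)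
  moreover have "integral {-e..0} g + integral {0..t} g = integral {-e..t} g"
    by (rule Henstock_Kurzweil_Integration.integral_combine) (use assms int in auto)
  moreover have "integral {-e..t - e} g + integral {t - e..t} g = integral {-e..t} g"
    by (rule Henstock_Kurzweil_Integration.integral_combine) (use assms int in auto)
  ultimately show ?thesis by linarith
qed

lemma abs_cross_diff_le:
  fixes a b a' b' :: real
  assumes "\<bar>a\<bar> \<le> m" "\<bar>b\<bar> \<le> m" "\<bar>a' - a\<bar> \<le> c" "\<bar>b' - b\<bar> \<le> c"
  shows "\<bar>a * b' - a' * b\<bar> \<le> 2 * m * c"
proof -
  have "a * b' - a' * b = a * (b' - b) - b * (a' - a)" by (simp add: algebra_simps)
  moreover have "\<bar>a * (b' - b)\<bar> \<le> m * c" "\<bar>b * (a' - a)\<bar> \<le> m * c"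
    unfolding abs_mult using assms by (auto intro!: mult_mono)
  ultimately show ?thesis by linarith
qed

lemma integral_sym_diff_eq:
  fixes x y :: "real \<Rightarrow> real"
  assumes cx: "continuous_on UNIV x" and cy: "continuous_on UNIV y" and e: "e > 0"
  defines "g \<equiv> \<lambda>s. (x s * y (s + e) - x (s + e) * y s) / e"
  shows "integral {0..t} (\<lambda>s. x s * ((y (s + e) - y (s - e)) / (2 * e)))
           - integral {0..t} (\<lambda>s. y s * ((x (s + e) - x (s - e)) / (2 * e)))
         = (integral {0..t} g + integral {0..t} (\<lambda>s. g (s - e))) / 2"
proof -
  have int: "f integrable_on {0..t}" if "continuous_on UNIV f" for f :: "real \<Rightarrow> real"
    by (rule integrable_continuous_interval) (rule continuous_on_subset[OF that], simp)
  note shifts = continuous_on_compose2[OF cx _ subset_UNIV] continuous_on_compose2[OF cy _ subset_UNIV]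
  have pointwise: "x s * ((y (s + e) - y (s - e)) / (2 * e)) - y s * ((x (s + e) - x (s - e)) / (2 * e))
          = g s / 2 + g (s - e) / 2" for s
    using e unfolding g_def by (simp add: field_simps)
  have "integral {0..t} (\<lambda>s. x s * ((y (s + e) - y (s - e)) / (2 * e)))
           - integral {0..t} (\<lambda>s. y s * ((x (s + e) - x (s - e)) / (2 * e)))
         = integral {0..t} (\<lambda>s. x s * ((y (s + e) - y (s - e)) / (2 * e))
                                - y s * ((x (s + e) - x (s - e)) / (2 * e)))"
    using e by (intro integral_diff[symmetric] int) (auto intro!: continuous_intros shifts cx cy)
  also have "\<dots> = integral {0..t} (\<lambda>s. g s / 2 + g (s - e) / 2)"
    unfolding pointwise ..
  also have "\<dots> = (integral {0..t} g + integral {0..t} (\<lambda>s. g (s - e))) / 2"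
    unfolding g_def using e by (subst integral_add) (auto intro!: int continuous_intros shifts cx cy)
  finally show ?thesis .
qed

lemma levy_sym_defect_bound:
  fixes x y :: "real \<Rightarrow> real"
  assumes cx: "continuous_on UNIV x" and cy: "continuous_on UNIV y"
    and "\<And>s. \<bar>x s\<bar> \<le> m" "\<And>s. \<bar>y s\<bar> \<le> m"
    and "\<And>s. \<bar>x (s + e) - x s\<bar> \<le> c" and "\<And>s. \<bar>y (s + e) - y s\<bar> \<le> c"
    and e: "e > 0" and t: "t \<ge> 0"
  shows "\<bar>integral {0..t} (\<lambda>s. (x s * y (s + e) - x (s + e) * y s) / e)
          - integral {0..t} (\<lambda>s. x s * ((y (s + e) - y (s - e)) / (2 * e)))
          + integral {0..t} (\<lambda>s. y s * ((x (s + e) - x (s - e)) / (2 * e)))\<bar> \<le> 2 * m * c"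
proof -
  define g where "g = (\<lambda>s. (x s * y (s + e) - x (s + e) * y s) / e)"
  have cg: "continuous_on UNIV g"
    unfolding g_def using e
    by (auto intro!: continuous_intros continuous_on_compose2[OF cx _ subset_UNIV]
                     continuous_on_compose2[OF cy _ subset_UNIV] cx cy)
  have "\<bar>g s\<bar> \<le> 2 * m * c / e" for s
    using abs_cross_diff_le[of "x s" m "y s" "x (s + e)" c "y (s + e)"] assms e
    unfolding g_def by (simp add: divide_right_mono)
  then have boundary: "\<bar>integral {a - e..a} g\<bar> \<le> 2 * m * c" for a
    using integral_bound[of "a - e" a g "2 * m * c / e"] e
    by (simp add: continuous_on_subset[OF cg])
  have "integral {0..t} (\<lambda>s. x s * ((y (s + e) - y (s - e)) / (2 * e)))
          - integral {0..t} (\<lambda>s. y s * ((x (s + e) - x (s - e)) / (2 * e)))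
        = (integral {0..t} g + integral {0..t} (\<lambda>s. g (s - e))) / 2"
    unfolding g_def by (rule integral_sym_diff_eq[OF cx cy e])
  moreover have "integral {0..t} g - integral {0..t} (\<lambda>s. g (s - e))
                   = integral {t - e..t} g - integral {0 - e..0} g"
    using integral_minus_integral_shift[OF cg t, of e] e by simp
  ultimately show ?thesis
    using boundary[of t] boundary[of 0] unfolding g_def[symmetric] by (auto simp: abs_le_iff)
qed

lemma clamp_in_Icc: "0 \<le> T \<Longrightarrow> max 0 (min T s) \<in> {0..T::real}"
  by auto

lemma continuous_on_ext:
  assumes "cont_process M T X" "0 \<le> T" "\<omega> \<in> space M"
  shows "continuous_on UNIV (\<lambda>s. ext T X s \<omega>)"
  unfolding ext_def
  by (rule continuous_on_compose2[of "{0..T}" "\<lambda>t. X t \<omega>"])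
     (use assms in \<open>auto simp: cont_process_def intro!: continuous_intros\<close>)

lemma measurable_ext [measurable]:
  assumes "cont_process M T X" "0 \<le> T"
  shows "(\<lambda>\<omega>. ext T X s \<omega>) \<in> borel_measurable M"
  unfolding ext_def using assms clamp_in_Icc[of T s] by (auto simp: cont_process_def)

lemma bounded_range_ext:
  assumes "cont_process M T X" "0 \<le> T" "\<omega> \<in> space M"
  shows "bounded (range (\<lambda>s. ext T X s \<omega>))"
proof -
  have "compact ((\<lambda>t. X t \<omega>) ` {0..T})"
    using assms by (intro compact_continuous_image) (auto simp: cont_process_def)
  moreover have "range (\<lambda>s. ext T X s \<omega>) \<subseteq> (\<lambda>t. X t \<omega>) ` {0..T}"
    using clamp_in_Icc[OF assms(2)] by (auto simp: ext_def)
  ultimately show ?thesis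
    using bounded_subset compact_imp_bounded by blast
qed

lemma uniformly_continuous_on_ext:
  assumes "cont_process M T X" "0 \<le> T" "\<omega> \<in> space M"
  shows "uniformly_continuous_on UNIV (\<lambda>s. ext T X s \<omega>)"
  unfolding ext_def
proof (rule uniformly_continuous_on_compose[where g = "\<lambda>s. max 0 (min T s)" and f = "\<lambda>t. X t \<omega>"])
  show "uniformly_continuous_on UNIV (\<lambda>s. max 0 (min T s))"
    unfolding uniformly_continuous_on_def dist_real_def
  proof (intro allI impI exI conjI ballI)
    fix e :: real and s u assume "0 < e" "\<bar>s - u\<bar> < e"
    then show "\<bar>max 0 (min T s) - max 0 (min T u)\<bar> < e"
      by (auto simp: max_def min_def)
  qed
  show "uniformly_continuous_on (range (\<lambda>s. max 0 (min T s))) (\<lambda>t. X t \<omega>)"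
  proof -
    have "range (\<lambda>s. max 0 (min T s)) = {0..T}"
      using assms(2) by (auto simp: image_iff) (metis max.absorb2 min.absorb2)
    then show ?thesis
      using assms by (auto simp: cont_process_def intro: compact_uniformly_continuous)
  qed
qed

section \<open>Boundedness and equicontinuity in probability\<close>

lemma sets_Collect_ex_continuous_gt:
  fixes f :: "'b::second_countable_topology \<Rightarrow> 'a \<Rightarrow> real"
  assumes U: "open U" and meas: "\<And>s. s \<in> U \<Longrightarrow> f s \<in> borel_measurable M"
    and cont: "\<And>\<omega>. \<omega> \<in> space M \<Longrightarrow> continuous_on U (\<lambda>s. f s \<omega>)"
  shows "{\<omega>\<in>space M. \<exists>s\<in>U. a < f s \<omega>} \<in> sets M"
proof -
  obtain D :: "'b set" where D: "countable D" "\<And>V. open V \<Longrightarrow> V \<noteq> {} \<Longrightarrow> \<exists>d\<in>D. d \<in> V"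
    by (rule countable_dense_setE) blast
  have "{\<omega>\<in>space M. \<exists>s\<in>U. a < f s \<omega>} = {\<omega>\<in>space M. \<exists>s\<in>D \<inter> U. a < f s \<omega>}"
  proof safe
    fix \<omega> s assume "\<omega> \<in> space M" "s \<in> U" "a < f s \<omega>"
    moreover have "open (U \<inter> (\<lambda>s. f s \<omega>) -` {a<..})"
      using cont[OF \<open>\<omega> \<in> space M\<close>] U by (intro continuous_open_preimage) auto
    ultimately obtain d where "d \<in> D" "d \<in> U \<inter> (\<lambda>s. f s \<omega>) -` {a<..}"
      using D(2) by blast
    then show "\<exists>s\<in>D \<inter> U. a < f s \<omega>" by auto
  qed auto
  also have "\<dots> \<in> sets M"
    using D(1) meas by (intro sets.sets_Collect_countable_Ex') auto
  finally show ?thesis .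
qed

lemma sets_ext_exceeds:
  assumes "cont_process M T X" "0 \<le> T"
  shows "{\<omega>\<in>space M. \<exists>s. a < \<bar>ext T X s \<omega>\<bar>} \<in> sets M"
proof -
  have "{\<omega>\<in>space M. \<exists>s\<in>UNIV. a < \<bar>ext T X s \<omega>\<bar>} \<in> sets M"
    using assms by (intro sets_Collect_ex_continuous_gt) (auto intro!: continuous_intros continuous_on_ext)
  then show ?thesis by simp
qed

lemma sets_ext_oscillation:
  assumes X: "cont_process M T X" and T: "0 \<le> T"
  shows "{\<omega>\<in>space M. \<exists>s u. \<bar>s - u\<bar> < r \<and> c < \<bar>ext T X s \<omega> - ext T X u \<omega>\<bar>} \<in> sets M"
proof -
  have "{\<omega>\<in>space M. \<exists>p\<in>{p. \<bar>fst p - snd p\<bar> < r}. c < \<bar>ext T X (fst p) \<omega> - ext T X (snd p) \<omega>\<bar>}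
          \<in> sets M"
    using X T by (intro sets_Collect_ex_continuous_gt)
      (auto intro!: continuous_intros open_Collect_less continuous_on_compose2[OF continuous_on_ext[OF X T]])
  then show ?thesis by simp
qed

lemma measure_ext_exceeds_tendsto_0:
  assumes "finite_measure M" and X: "cont_process M T X" and T: "0 \<le> T"
  shows "(\<lambda>m::nat. measure M {\<omega>\<in>space M. \<exists>s. real m < \<bar>ext T X s \<omega>\<bar>}) \<longlonglongrightarrow> 0"
proof -
  interpret finite_measure M by fact
  define A where "A m = {\<omega>\<in>space M. \<exists>s. real m < \<bar>ext T X s \<omega>\<bar>}" for m :: nat
  have "range A \<subseteq> sets M"
    unfolding A_def using sets_ext_exceeds[OF X T] by blast
  moreover have "decseq A"
    unfolding A_def decseq_def by (auto 4 3 intro: le_less_trans of_nat_mono)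
  moreover have "(\<Inter>m. A m) = {}"
  proof safe
    fix \<omega> assume "\<omega> \<in> (\<Inter>m. A m)"
    then have "\<omega> \<in> space M" and exceeds: "\<And>m. \<exists>s. real m < \<bar>ext T X s \<omega>\<bar>"
      unfolding A_def by auto
    obtain B where B: "\<And>s. \<bar>ext T X s \<omega>\<bar> \<le> B"
      using bounded_range_ext[OF X T \<open>\<omega> \<in> space M\<close>] by (auto simp: bounded_real)
    obtain m :: nat where "B < real m"
      using reals_Archimedean2 by blast
    moreover obtain s where "real m < \<bar>ext T X s \<omega>\<bar>"
      using exceeds by blast
    ultimately show "\<omega> \<in> {}"
      using B[of s] by linarith
  qed
  ultimately show ?thesis
    using finite_Lim_measure_decseq[of A] unfolding A_def by simp
qed

lemma measure_ext_oscillation_tendsto_0: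
  assumes "finite_measure M" and X: "cont_process M T X" and T: "0 \<le> T" and c: "0 < c"
  shows "(\<lambda>n::nat. measure M {\<omega>\<in>space M. \<exists>s u. \<bar>s - u\<bar> < 1 / Suc n
                                  \<and> c < \<bar>ext T X s \<omega> - ext T X u \<omega>\<bar>}) \<longlonglongrightarrow> 0"
proof -
  interpret finite_measure M by fact
  define A where "A n = {\<omega>\<in>space M. \<exists>s u. \<bar>s - u\<bar> < 1 / Suc n
                                  \<and> c < \<bar>ext T X s \<omega> - ext T X u \<omega>\<bar>}" for n :: nat
  have "range A \<subseteq> sets M"
    unfolding A_def using sets_ext_oscillation[OF X T] by blast
  moreover have "decseq A"
  proof (rule decseq_SucI)
    fix n :: nat
    have "1 / real (Suc (Suc n)) \<le> 1 / real (Suc n)"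
      by (simp add: divide_simps)
    then show "A (Suc n) \<subseteq> A n"
      unfolding A_def by (auto intro: less_le_trans)
  qed
  moreover have "(\<Inter>n. A n) = {}"
  proof safe
    fix \<omega> assume "\<omega> \<in> (\<Inter>n. A n)"
    then have "\<omega> \<in> space M" and oscillates: "\<And>n. \<exists>s u. \<bar>s - u\<bar> < 1 / Suc n
                                       \<and> c < \<bar>ext T X s \<omega> - ext T X u \<omega>\<bar>"
      unfolding A_def by auto
    have "\<exists>d>0. \<forall>u s. dist s u < d \<longrightarrow> dist (ext T X s \<omega>) (ext T X u \<omega>) < c"
      using uniformly_continuous_on_ext[OF X T \<open>\<omega> \<in> space M\<close>] c
      unfolding uniformly_continuous_on_def by simp
    then obtain d where "d > 0" and d: "\<And>u s. dist s u < d \<Longrightarrow> dist (ext T X s \<omega>) (ext T X u \<omega>) < c"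
      by blast
    obtain n where "1 / Suc n < d"
      using \<open>d > 0\<close> nat_approx_posE by blast
    moreover obtain s u where "\<bar>s - u\<bar> < 1 / Suc n" "c < \<bar>ext T X s \<omega> - ext T X u \<omega>\<bar>"
      using oscillates by blast
    ultimately have "\<bar>s - u\<bar> < d" "c < \<bar>ext T X s \<omega> - ext T X u \<omega>\<bar>"
      by linarith+
    with d[of s u] show "\<omega> \<in> {}"
      by (simp add: dist_real_def)
  qed
  ultimately show ?thesis
    using finite_Lim_measure_decseq[of A] unfolding A_def by simp
qed

section \<open>Algebra of ucp limits\<close>

definition ucp_null :: "'a measure \<Rightarrow> real \<Rightarrow> (real \<Rightarrow> real \<Rightarrow> 'a \<Rightarrow> real) \<Rightarrow> bool" where
  "ucp_null M T D \<longleftrightarrow> (\<forall>\<delta>>0. \<forall>\<eta>>0. \<exists>\<epsilon>0>0. \<forall>\<epsilon>. 0 < \<epsilon> \<and> \<epsilon> < \<epsilon>0 \<longrightarrow>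
     (\<exists>A\<in>sets M. {\<omega>\<in>space M. \<exists>t\<in>{0..T}. \<bar>D \<epsilon> t \<omega>\<bar> > \<delta>} \<subseteq> A \<and> measure M A < \<eta>))"

lemma ucp_conv_iff_ucp_null:
  "ucp_conv M T F I \<longleftrightarrow> cont_process M T I \<and> ucp_null M T (\<lambda>\<epsilon> t \<omega>. F \<epsilon> t \<omega> - I t \<omega>)"
  by (simp add: ucp_conv_def ucp_null_def)

lemma ucp_null_le_add:
  assumes D1: "ucp_null M T D1" and D2: "ucp_null M T D2"
    and le: "\<And>\<epsilon> t \<omega>. 0 < \<epsilon> \<Longrightarrow> t \<in> {0..T} \<Longrightarrow> \<omega> \<in> space M
               \<Longrightarrow> \<bar>D \<epsilon> t \<omega>\<bar> \<le> \<bar>D1 \<epsilon> t \<omega>\<bar> + \<bar>D2 \<epsilon> t \<omega>\<bar>"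
  shows "ucp_null M T D"
  unfolding ucp_null_def
proof (intro allI impI)
  fix \<delta> \<eta> :: real assume "\<delta> > 0" "\<eta> > 0"
  then have half: "\<delta> / 2 > 0" "\<eta> / 2 > 0" by simp_all
  obtain e1 where "e1 > 0" and e1: "\<forall>\<epsilon>. 0 < \<epsilon> \<and> \<epsilon> < e1 \<longrightarrow> (\<exists>A\<in>sets M.
      {\<omega>\<in>space M. \<exists>t\<in>{0..T}. \<bar>D1 \<epsilon> t \<omega>\<bar> > \<delta> / 2} \<subseteq> A \<and> measure M A < \<eta> / 2)"
    using D1[unfolded ucp_null_def, rule_format, OF half] by blast
  obtain e2 where "e2 > 0" and e2: "\<forall>\<epsilon>. 0 < \<epsilon> \<and> \<epsilon> < e2 \<longrightarrow> (\<exists>A\<in>sets M.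
      {\<omega>\<in>space M. \<exists>t\<in>{0..T}. \<bar>D2 \<epsilon> t \<omega>\<bar> > \<delta> / 2} \<subseteq> A \<and> measure M A < \<eta> / 2)"
    using D2[unfolded ucp_null_def, rule_format, OF half] by blast
  show "\<exists>\<epsilon>0>0. \<forall>\<epsilon>. 0 < \<epsilon> \<and> \<epsilon> < \<epsilon>0 \<longrightarrow> (\<exists>A\<in>sets M.
          {\<omega>\<in>space M. \<exists>t\<in>{0..T}. \<bar>D \<epsilon> t \<omega>\<bar> > \<delta>} \<subseteq> A \<and> measure M A < \<eta>)"
  proof (intro exI[of _ "min e1 e2"] conjI allI impI)
    show "0 < min e1 e2" using \<open>e1 > 0\<close> \<open>e2 > 0\<close> by simp
    fix \<epsilon> assume \<epsilon>: "0 < \<epsilon> \<and> \<epsilon> < min e1 e2"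
    obtain A1 where A1: "A1 \<in> sets M" "{\<omega>\<in>space M. \<exists>t\<in>{0..T}. \<bar>D1 \<epsilon> t \<omega>\<bar> > \<delta> / 2} \<subseteq> A1"
        "measure M A1 < \<eta> / 2"
      using e1[rule_format, of \<epsilon>] \<epsilon> by auto
    obtain A2 where A2: "A2 \<in> sets M" "{\<omega>\<in>space M. \<exists>t\<in>{0..T}. \<bar>D2 \<epsilon> t \<omega>\<bar> > \<delta> / 2} \<subseteq> A2"
        "measure M A2 < \<eta> / 2"
      using e2[rule_format, of \<epsilon>] \<epsilon> by auto
    have "\<bar>D1 \<epsilon> t \<omega>\<bar> > \<delta> / 2 \<or> \<bar>D2 \<epsilon> t \<omega>\<bar> > \<delta> / 2"
      if "t \<in> {0..T}" "\<omega> \<in> space M" "\<bar>D \<epsilon> t \<omega>\<bar> > \<delta>" for t \<omega>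
      using le[of \<epsilon> t \<omega>] that \<epsilon> by linarith
    then have "{\<omega>\<in>space M. \<exists>t\<in>{0..T}. \<bar>D \<epsilon> t \<omega>\<bar> > \<delta>} \<subseteq> A1 \<union> A2"
      using A1(2) A2(2) by blast
    moreover have "measure M (A1 \<union> A2) < \<eta>"
      using measure_Un_le[OF A1(1) A2(1)] A1(3) A2(3) by linarith
    ultimately show "\<exists>A\<in>sets M. {\<omega>\<in>space M. \<exists>t\<in>{0..T}. \<bar>D \<epsilon> t \<omega>\<bar> > \<delta>} \<subseteq> A \<and> measure M A < \<eta>"
      using A1(1) A2(1) by blast
  qed
qed

lemma cont_process_add:
  "cont_process M T I \<Longrightarrow> cont_process M T J \<Longrightarrow> cont_process M T (\<lambda>t \<omega>. I t \<omega> + J t \<omega>)"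
  unfolding cont_process_def by (auto intro!: continuous_intros borel_measurable_add borel_measurable_diff)

lemma cont_process_diff:
  "cont_process M T I \<Longrightarrow> cont_process M T J \<Longrightarrow> cont_process M T (\<lambda>t \<omega>. I t \<omega> - J t \<omega>)"
  unfolding cont_process_def by (auto intro!: continuous_intros borel_measurable_add borel_measurable_diff)

lemma ucp_conv_add:
  assumes "ucp_conv M T F I" "ucp_conv M T G J"
  shows "ucp_conv M T (\<lambda>\<epsilon> t \<omega>. F \<epsilon> t \<omega> + G \<epsilon> t \<omega>) (\<lambda>t \<omega>. I t \<omega> + J t \<omega>)"
proof -
  have "ucp_null M T (\<lambda>\<epsilon> t \<omega>. F \<epsilon> t \<omega> - I t \<omega>)" "ucp_null M T (\<lambda>\<epsilon> t \<omega>. G \<epsilon> t \<omega> - J t \<omega>)"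
    using assms unfolding ucp_conv_iff_ucp_null by blast+
  then have "ucp_null M T (\<lambda>\<epsilon> t \<omega>. F \<epsilon> t \<omega> + G \<epsilon> t \<omega> - (I t \<omega> + J t \<omega>))"
    by (rule ucp_null_le_add) arith
  then show ?thesis
    using assms cont_process_add unfolding ucp_conv_iff_ucp_null by blast
qed

lemma ucp_conv_diff:
  assumes "ucp_conv M T F I" "ucp_conv M T G J"
  shows "ucp_conv M T (\<lambda>\<epsilon> t \<omega>. F \<epsilon> t \<omega> - G \<epsilon> t \<omega>) (\<lambda>t \<omega>. I t \<omega> - J t \<omega>)"
proof -
  have "ucp_null M T (\<lambda>\<epsilon> t \<omega>. F \<epsilon> t \<omega> - I t \<omega>)" "ucp_null M T (\<lambda>\<epsilon> t \<omega>. G \<epsilon> t \<omega> - J t \<omega>)"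
    using assms unfolding ucp_conv_iff_ucp_null by blast+
  then have "ucp_null M T (\<lambda>\<epsilon> t \<omega>. F \<epsilon> t \<omega> - G \<epsilon> t \<omega> - (I t \<omega> - J t \<omega>))"
    by (rule ucp_null_le_add) arith
  then show ?thesis
    using assms cont_process_diff unfolding ucp_conv_iff_ucp_null by blast
qed

lemma ucp_conv_perturb:
  assumes F: "ucp_conv M T F I" and D: "ucp_null M T D"
    and close: "\<And>\<epsilon> t \<omega>. 0 < \<epsilon> \<Longrightarrow> t \<in> {0..T} \<Longrightarrow> \<omega> \<in> space M
                  \<Longrightarrow> \<bar>G \<epsilon> t \<omega> - F \<epsilon> t \<omega>\<bar> \<le> \<bar>D \<epsilon> t \<omega>\<bar>"
  shows "ucp_conv M T G I"
proof -
  have "ucp_null M T (\<lambda>\<epsilon> t \<omega>. G \<epsilon> t \<omega> - I t \<omega>)"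
  proof (rule ucp_null_le_add[OF _ D])
    show "ucp_null M T (\<lambda>\<epsilon> t \<omega>. F \<epsilon> t \<omega> - I t \<omega>)"
      using F unfolding ucp_conv_iff_ucp_null by blast
    show "\<bar>G \<epsilon> t \<omega> - I t \<omega>\<bar> \<le> \<bar>F \<epsilon> t \<omega> - I t \<omega>\<bar> + \<bar>D \<epsilon> t \<omega>\<bar>"
      if "0 < \<epsilon>" "t \<in> {0..T}" "\<omega> \<in> space M" for \<epsilon> t \<omega>
      using close[OF that] by linarith
  qed
  then show ?thesis
    using F unfolding ucp_conv_iff_ucp_null by blast
qed

lemma ucp_conv_cong:
  assumes F: "ucp_conv M T F I"
    and eq: "\<And>\<epsilon> t \<omega>. 0 < \<epsilon> \<Longrightarrow> t \<in> {0..T} \<Longrightarrow> \<omega> \<in> space M \<Longrightarrow> G \<epsilon> t \<omega> = F \<epsilon> t \<omega>"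
  shows "ucp_conv M T G I"
proof (rule ucp_conv_perturb[OF F])
  show "ucp_null M T (\<lambda>\<epsilon> t \<omega>. F \<epsilon> t \<omega> - I t \<omega>)"
    using F unfolding ucp_conv_iff_ucp_null by blast
qed (simp add: eq)

section \<open>Levy area versus symmetric and forward integrals\<close>

lemma levy_sym_defect_bound_ext:
  assumes X: "cont_process M T X" and Y: "cont_process M T Y" and T: "0 \<le> T" and \<omega>: "\<omega> \<in> space M"
    and "\<And>s. \<bar>ext T X s \<omega>\<bar> \<le> m" "\<And>s. \<bar>ext T Y s \<omega>\<bar> \<le> m"
    and oX: "\<And>s u. \<bar>s - u\<bar> < d \<Longrightarrow> \<bar>ext T X s \<omega> - ext T X u \<omega>\<bar> \<le> c"
    and oY: "\<And>s u. \<bar>s - u\<bar> < d \<Longrightarrow> \<bar>ext T Y s \<omega> - ext T Y u \<omega>\<bar> \<le> c"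
    and \<epsilon>: "0 < \<epsilon>" "\<epsilon> < d" and t: "0 \<le> t"
  shows "\<bar>levy_approx T X Y \<epsilon> t \<omega> - sym_approx T X Y \<epsilon> t \<omega> + sym_approx T Y X \<epsilon> t \<omega>\<bar> \<le> 2 * m * c"
  unfolding levy_approx_def sym_approx_def
proof (rule levy_sym_defect_bound[OF continuous_on_ext[OF X T \<omega>] continuous_on_ext[OF Y T \<omega>]])
  show "\<bar>ext T X (s + \<epsilon>) \<omega> - ext T X s \<omega>\<bar> \<le> c" "\<bar>ext T Y (s + \<epsilon>) \<omega> - ext T Y s \<omega>\<bar> \<le> c" for s
    using oX[of "s + \<epsilon>" s] oY[of "s + \<epsilon>" s] \<epsilon> by auto
qed (use assms in auto)

lemma ext_paths_bounded_equicontinuous_off_small_setE: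
  assumes M: "finite_measure M" and X: "cont_process M T X" and Y: "cont_process M T Y" and T: "0 \<le> T"
    and "\<delta> > 0" "\<eta> > 0"
  obtains A m c d where "A \<in> sets M" "measure M A < \<eta>" "2 * m * c < \<delta>" "0 < d"
    "\<And>\<omega> s. \<omega> \<in> space M - A \<Longrightarrow> \<bar>ext T X s \<omega>\<bar> \<le> m"
    "\<And>\<omega> s. \<omega> \<in> space M - A \<Longrightarrow> \<bar>ext T Y s \<omega>\<bar> \<le> m"
    "\<And>\<omega> s u. \<omega> \<in> space M - A \<Longrightarrow> \<bar>s - u\<bar> < d \<Longrightarrow> \<bar>ext T X s \<omega> - ext T X u \<omega>\<bar> \<le> c"
    "\<And>\<omega> s u. \<omega> \<in> space M - A \<Longrightarrow> \<bar>s - u\<bar> < d \<Longrightarrow> \<bar>ext T Y s \<omega> - ext T Y u \<omega>\<bar> \<le> c"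
proof -
  define big where "big Z m = {\<omega>\<in>space M. \<exists>s. real m < \<bar>ext T Z s \<omega>\<bar>}" for Z and m :: nat
  define osc where "osc Z c n = {\<omega>\<in>space M. \<exists>s u. \<bar>s - u\<bar> < 1 / Suc n
                                   \<and> c < \<bar>ext T Z s \<omega> - ext T Z u \<omega>\<bar>}" for Z c and n :: nat
  have "\<forall>\<^sub>F m in sequentially. measure M (big X m) < \<eta> / 4 \<and> measure M (big Y m) < \<eta> / 4"
    unfolding big_def using \<open>\<eta> > 0\<close>
    by (intro eventually_conj order_tendstoD(2)[OF measure_ext_exceeds_tendsto_0[OF M X T]]
                              order_tendstoD(2)[OF measure_ext_exceeds_tendsto_0[OF M Y T]]) auto
  then obtain m where m: "measure M (big X m) < \<eta> / 4" "measure M (big Y m) < \<eta> / 4"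
    using eventually_happens' sequentially_bot by blast
  define c where "c = \<delta> / (4 * (real m + 1))"
  have "c > 0" "2 * real m * c < \<delta>"
    unfolding c_def using \<open>\<delta> > 0\<close> by (simp_all add: divide_simps)
  have "\<forall>\<^sub>F n in sequentially. measure M (osc X c n) < \<eta> / 4 \<and> measure M (osc Y c n) < \<eta> / 4"
    unfolding osc_def using \<open>\<eta> > 0\<close>
    by (intro eventually_conj order_tendstoD(2)[OF measure_ext_oscillation_tendsto_0[OF M X T \<open>c > 0\<close>]]
                              order_tendstoD(2)[OF measure_ext_oscillation_tendsto_0[OF M Y T \<open>c > 0\<close>]]) auto
  then obtain n where n: "measure M (osc X c n) < \<eta> / 4" "measure M (osc Y c n) < \<eta> / 4"
    using eventually_happens' sequentially_bot by blast
  define A where "A = big X m \<union> big Y m \<union> osc X c n \<union> osc Y c n"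
  have sets: "big Z m \<in> sets M" "osc Z c n \<in> sets M" if "cont_process M T Z" for Z
    unfolding big_def osc_def using sets_ext_exceeds sets_ext_oscillation that T by blast+
  have "A \<in> sets M"
    unfolding A_def using sets X Y by auto
  moreover have "measure M A < \<eta>"
    unfolding A_def using sets[OF X] sets[OF Y] m n
      measure_Un_le[of "big X m \<union> big Y m \<union> osc X c n" M "osc Y c n"]
      measure_Un_le[of "big X m \<union> big Y m" M "osc X c n"] measure_Un_le[of "big X m" M "big Y m"]
    by auto
  moreover have "\<bar>ext T Z s \<omega>\<bar> \<le> real m" if "\<omega> \<in> space M - A" "Z \<in> {X, Y}" for Z s \<omega>
    using that unfolding A_def big_def by (auto simp: not_less)
  moreover have "\<bar>ext T Z s \<omega> - ext T Z u \<omega>\<bar> \<le> c"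
    if "\<omega> \<in> space M - A" "\<bar>s - u\<bar> < 1 / Suc n" "Z \<in> {X, Y}" for Z s u \<omega>
    using that unfolding A_def osc_def by (auto simp: not_less) (meson not_le)+
  ultimately show ?thesis
    using that[of A "real m" c "1 / Suc n"] \<open>2 * real m * c < \<delta>\<close> by auto
qed

lemma ucp_null_levy_sym_defect:
  assumes M: "finite_measure M" and X: "cont_process M T X" and Y: "cont_process M T Y" and T: "0 \<le> T"
  shows "ucp_null M T (\<lambda>\<epsilon> t \<omega>. levy_approx T X Y \<epsilon> t \<omega> - sym_approx T X Y \<epsilon> t \<omega> + sym_approx T Y X \<epsilon> t \<omega>)"
  unfolding ucp_null_def
proof (intro allI impI)
  fix \<delta> \<eta> :: real assume "\<delta> > 0" "\<eta> > 0"
  then obtain A m c d where A: "A \<in> sets M" "measure M A < \<eta>" and "2 * m * c < \<delta>" "0 < d"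
    and bX: "\<And>\<omega> s. \<omega> \<in> space M - A \<Longrightarrow> \<bar>ext T X s \<omega>\<bar> \<le> m"
    and bY: "\<And>\<omega> s. \<omega> \<in> space M - A \<Longrightarrow> \<bar>ext T Y s \<omega>\<bar> \<le> m"
    and oX: "\<And>\<omega> s u. \<omega> \<in> space M - A \<Longrightarrow> \<bar>s - u\<bar> < d \<Longrightarrow> \<bar>ext T X s \<omega> - ext T X u \<omega>\<bar> \<le> c"
    and oY: "\<And>\<omega> s u. \<omega> \<in> space M - A \<Longrightarrow> \<bar>s - u\<bar> < d \<Longrightarrow> \<bar>ext T Y s \<omega> - ext T Y u \<omega>\<bar> \<le> c"
    using ext_paths_bounded_equicontinuous_off_small_setE[OF M X Y T] by blast
  have "\<omega> \<in> A"
    if "\<omega> \<in> space M" "t \<in> {0..T}" "0 < \<epsilon>" "\<epsilon> < d"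
      and "\<bar>levy_approx T X Y \<epsilon> t \<omega> - sym_approx T X Y \<epsilon> t \<omega> + sym_approx T Y X \<epsilon> t \<omega>\<bar> > \<delta>"
    for \<epsilon> t \<omega>
  proof (rule ccontr)
    assume "\<omega> \<notin> A"
    then have "\<bar>levy_approx T X Y \<epsilon> t \<omega> - sym_approx T X Y \<epsilon> t \<omega> + sym_approx T Y X \<epsilon> t \<omega>\<bar> \<le> 2 * m * c"
      using that(1-4) bX bY oX oY by (intro levy_sym_defect_bound_ext[OF X Y T \<open>\<omega> \<in> space M\<close>]) auto
    then show False
      using that(5) \<open>2 * m * c < \<delta>\<close> by linarith
  qed
  then show "\<exists>\<epsilon>0>0. \<forall>\<epsilon>. 0 < \<epsilon> \<and> \<epsilon> < \<epsilon>0 \<longrightarrow> (\<exists>A\<in>sets M. {\<omega>\<in>space M. \<exists>t\<in>{0..T}.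
          \<bar>levy_approx T X Y \<epsilon> t \<omega> - sym_approx T X Y \<epsilon> t \<omega> + sym_approx T Y X \<epsilon> t \<omega>\<bar> > \<delta>} \<subseteq> A
          \<and> measure M A < \<eta>)"
    using A \<open>0 < d\<close> by (intro exI[of _ d] conjI allI impI bexI[of _ A] subsetI) auto
qed

lemma levy_approx_eq_fwd_approx_diff:
  assumes X: "cont_process M T X" and Y: "cont_process M T Y" and T: "0 \<le> T" and \<omega>: "\<omega> \<in> space M"
  shows "levy_approx T X Y \<epsilon> t \<omega> = fwd_approx T X Y \<epsilon> t \<omega> - fwd_approx T Y X \<epsilon> t \<omega>"
proof -
  have integrable: "(\<lambda>s. ext T Z s \<omega> * ((ext T W (s + \<epsilon>) \<omega> - ext T W s \<omega>) / \<epsilon>)) integrable_on {0..t}"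
    if Z: "cont_process M T Z" and W: "cont_process M T W" for Z W
    unfolding divide_inverse
    by (rule integrable_continuous_interval, rule continuous_on_subset[of UNIV])
       (auto intro!: continuous_intros continuous_on_ext[OF Z T \<omega>] continuous_on_ext[OF W T \<omega>]
                     continuous_on_compose2[OF continuous_on_ext[OF W T \<omega>]])
  show ?thesis
    unfolding levy_approx_def fwd_approx_def integral_diff[OF integrable[OF X Y] integrable[OF Y X], symmetric]
    by (rule integral_cong) (simp add: diff_divide_distrib algebra_simps)
qed

lemma levy_approx_sym_approx_relations:
  assumes M: "finite_measure M" and X: "cont_process M T X" and Y: "cont_process M T Y" and T: "0 \<le> T"
  shows "ucp_conv M T (sym_approx T X Y) I1 \<Longrightarrow> ucp_conv M T (sym_approx T Y X) I2
           \<Longrightarrow> ucp_conv M T (levy_approx T X Y) (\<lambda>t \<omega>. I1 t \<omega> - I2 t \<omega>)"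
    and "ucp_conv M T (levy_approx T X Y) L \<Longrightarrow> ucp_conv M T (sym_approx T X Y) I1
           \<Longrightarrow> ucp_conv M T (sym_approx T Y X) (\<lambda>t \<omega>. I1 t \<omega> - L t \<omega>)"
    and "ucp_conv M T (levy_approx T X Y) L \<Longrightarrow> ucp_conv M T (sym_approx T Y X) I2
           \<Longrightarrow> ucp_conv M T (sym_approx T X Y) (\<lambda>t \<omega>. L t \<omega> + I2 t \<omega>)"
proof -
  note defect = ucp_null_levy_sym_defect[OF M X Y T]
  show "ucp_conv M T (levy_approx T X Y) (\<lambda>t \<omega>. I1 t \<omega> - I2 t \<omega>)"
    if "ucp_conv M T (sym_approx T X Y) I1" "ucp_conv M T (sym_approx T Y X) I2"
    using ucp_conv_perturb[OF ucp_conv_diff[OF that] defect] by simp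
  show "ucp_conv M T (sym_approx T Y X) (\<lambda>t \<omega>. I1 t \<omega> - L t \<omega>)"
    if "ucp_conv M T (levy_approx T X Y) L" "ucp_conv M T (sym_approx T X Y) I1"
    using ucp_conv_perturb[OF ucp_conv_diff[OF that(2,1)] defect] by (simp add: abs_minus_commute)
  show "ucp_conv M T (sym_approx T X Y) (\<lambda>t \<omega>. L t \<omega> + I2 t \<omega>)"
    if "ucp_conv M T (levy_approx T X Y) L" "ucp_conv M T (sym_approx T Y X) I2"
    using ucp_conv_perturb[OF ucp_conv_add[OF that] defect] by (simp add: abs_minus_commute)
qed

lemma levy_approx_fwd_approx_relations:
  assumes X: "cont_process M T X" and Y: "cont_process M T Y" and T: "0 \<le> T"
  shows "ucp_conv M T (fwd_approx T X Y) I1 \<Longrightarrow> ucp_conv M T (fwd_approx T Y X) I2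
           \<Longrightarrow> ucp_conv M T (levy_approx T X Y) (\<lambda>t \<omega>. I1 t \<omega> - I2 t \<omega>)"
    and "ucp_conv M T (levy_approx T X Y) L \<Longrightarrow> ucp_conv M T (fwd_approx T X Y) I1
           \<Longrightarrow> ucp_conv M T (fwd_approx T Y X) (\<lambda>t \<omega>. I1 t \<omega> - L t \<omega>)"
    and "ucp_conv M T (levy_approx T X Y) L \<Longrightarrow> ucp_conv M T (fwd_approx T Y X) I2
           \<Longrightarrow> ucp_conv M T (fwd_approx T X Y) (\<lambda>t \<omega>. L t \<omega> + I2 t \<omega>)"
proof -
  note fwd = levy_approx_eq_fwd_approx_diff[OF X Y T]
  show "ucp_conv M T (levy_approx T X Y) (\<lambda>t \<omega>. I1 t \<omega> - I2 t \<omega>)"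
    if "ucp_conv M T (fwd_approx T X Y) I1" "ucp_conv M T (fwd_approx T Y X) I2"
    using ucp_conv_cong[OF ucp_conv_diff[OF that]] by (simp add: fwd)
  show "ucp_conv M T (fwd_approx T Y X) (\<lambda>t \<omega>. I1 t \<omega> - L t \<omega>)"
    if "ucp_conv M T (levy_approx T X Y) L" "ucp_conv M T (fwd_approx T X Y) I1"
    using ucp_conv_cong[OF ucp_conv_diff[OF that(2,1)]] by (simp add: fwd)
  show "ucp_conv M T (fwd_approx T X Y) (\<lambda>t \<omega>. L t \<omega> + I2 t \<omega>)"
    if "ucp_conv M T (levy_approx T X Y) L" "ucp_conv M T (fwd_approx T Y X) I2"
    using ucp_conv_cong[OF ucp_conv_add[OF that]] by (simp add: fwd)
qed

theorem proposition4p9: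
  fixes M :: "'a measure" and T :: real and X Y :: "real \<Rightarrow> 'a \<Rightarrow> real"
  assumes "prob_space M" and "T > 0"
    and "cont_process M T X" and "cont_process M T Y"
  shows
   "(\<forall>L I1 I2.
      (ucp_conv M T (sym_approx T X Y) I1 \<and> ucp_conv M T (sym_approx T Y X) I2
         \<longrightarrow> ucp_conv M T (levy_approx T X Y) (\<lambda>t \<omega>. I1 t \<omega> - I2 t \<omega>)) \<and>
      (ucp_conv M T (levy_approx T X Y) L \<and> ucp_conv M T (sym_approx T X Y) I1
         \<longrightarrow> ucp_conv M T (sym_approx T Y X) (\<lambda>t \<omega>. I1 t \<omega> - L t \<omega>)) \<and>
      (ucp_conv M T (levy_approx T X Y) L \<and> ucp_conv M T (sym_approx T Y X) I2
         \<longrightarrow> ucp_conv M T (sym_approx T X Y) (\<lambda>t \<omega>. L t \<omega> + I2 t \<omega>)))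
    \<and>
    (\<forall>L I1 I2.
      (ucp_conv M T (fwd_approx T X Y) I1 \<and> ucp_conv M T (fwd_approx T Y X) I2
         \<longrightarrow> ucp_conv M T (levy_approx T X Y) (\<lambda>t \<omega>. I1 t \<omega> - I2 t \<omega>)) \<and>
      (ucp_conv M T (levy_approx T X Y) L \<and> ucp_conv M T (fwd_approx T X Y) I1
         \<longrightarrow> ucp_conv M T (fwd_approx T Y X) (\<lambda>t \<omega>. I1 t \<omega> - L t \<omega>)) \<and>
      (ucp_conv M T (levy_approx T X Y) L \<and> ucp_conv M T (fwd_approx T Y X) I2
         \<longrightarrow> ucp_conv M T (fwd_approx T X Y) (\<lambda>t \<omega>. L t \<omega> + I2 t \<omega>)))"
proof -
  have T: "0 \<le> T" using \<open>T > 0\<close> by simp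
  note sym = levy_approx_sym_approx_relations[OF prob_space.finite_measure[OF assms(1)] assms(3,4) T]
  note fwd = levy_approx_fwd_approx_relations[OF assms(3,4) T]
  show ?thesis
    using sym fwd by blast
qed

end
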